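(* Let $d\ge 2$ be an integer and $\mathcal{T}=[t_{i_1,\ldots,i_d}]\in\mathrm{Sym}(2,d)\setminus\{0\}$. Assume that $\mathcal{T}$ has a best rank one approximation which is not symmetric. Then for each $i_3,\ldots,i_d\in\{1,2\}$ the $2\times 2$ symmetric matrix $[t_{i,j,i_3,\ldots,i_d}]_{i,j=1}^2$ has trace zero.
   Context: $\mathrm{Sym}(2,d)$ is the space of real tensors $[t_{i_1,\ldots,i_d}]_{i_1,\ldots,i_d=1}^2$ invariant under all permutations of indices. Norm $\|\mathcal{T}\|=\sqrt{\sum t_{i_1,\ldots,i_d}^2}$; $\mathrm{S}^1$ is the unit circle in $\mathbb{R}^2$. A best rank one approximation of $\mathcal{T}$ is a tensor $a\,\mathbf{x}_1\otimes\cdots\otimes\mathbf{x}_d$ ($a\in\mathbb{R}$, $\mathbf{x}_j\in\mathrm{S}^1$) minimizing $\|\mathcal{T}-s\,\mathbf{y}_1\otimes\cdots\otimes\mathbf{y}_d\|$ over $s\in\mathbb{R}$, $\mathbf{y}_j\in\mathrm{S}^1$; it is symmetric if it is a symmetric tensor. *)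

theory Defs
  imports Complex_Main "HOL-Library.Multiset"
begin

text \<open>Tensors in (R^2)^{\<otimes> d}: real-valued functions on index lists of length d with
  entries in {1,2}. Only values on idx d matter.\<close>

definition idx :: "nat \<Rightarrow> nat list set" where
  "idx d = {is. length is = d \<and> set is \<subseteq> {1,2}}"

definition sym_tensor :: "nat \<Rightarrow> (nat list \<Rightarrow> real) \<Rightarrow> bool" where
  "sym_tensor d T \<longleftrightarrow> (\<forall>is\<in>idx d. \<forall>js. mset js = mset is \<longrightarrow> T js = T is)"

definition tnorm :: "nat \<Rightarrow> (nat list \<Rightarrow> real) \<Rightarrow> real" where
  "tnorm d T = sqrt (\<Sum>is\<in>idx d. (T is)\<^sup>2)"

definition on_S1 :: "(nat \<Rightarrow> real) \<Rightarrow> bool" where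
  "on_S1 v \<longleftrightarrow> (v 1)\<^sup>2 + (v 2)\<^sup>2 = 1"

text \<open>The rank one tensor a x_1 \<otimes> ... \<otimes> x_d (vectors indexed 0..d-1).\<close>
definition rank_one :: "nat \<Rightarrow> real \<Rightarrow> (nat \<Rightarrow> nat \<Rightarrow> real) \<Rightarrow> nat list \<Rightarrow> real" where
  "rank_one d a x = (\<lambda>is. a * (\<Prod>k<d. x k (is ! k)))"

definition best_rank_one_approx ::
  "nat \<Rightarrow> (nat list \<Rightarrow> real) \<Rightarrow> real \<Rightarrow> (nat \<Rightarrow> nat \<Rightarrow> real) \<Rightarrow> bool" where
  "best_rank_one_approx d T a x \<longleftrightarrow>
     (\<forall>k<d. on_S1 (x k)) \<and>
     (\<forall>s y. (\<forall>k<d. on_S1 (y k)) \<longrightarrow>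
        tnorm d (\<lambda>is. T is - rank_one d a x is) \<le> tnorm d (\<lambda>is. T is - rank_one d s y is))"

end

theory Submission
  imports Defs "HOL-Combinatorics.Permutations"
begin

text \<open>Expanding the squared distance shows that a best rank one approximation \<open>a x\<^sub>1 \<otimes> \<dots> \<otimes> x\<^sub>d\<close>
  maximizes \<open>\<bar>\<langle>T, y\<^sub>1 \<otimes> \<dots> \<otimes> y\<^sub>d\<rangle>\<bar>\<close> over unit vectors, with maximum \<open>\<bar>a\<bar>\<close>. If it is not
  symmetric, two of its factors are linearly independent, and by symmetry of \<open>T\<close> they can be
  moved to the first two slots. A symmetric \<open>2 \<times> 2\<close> matrix whose bilinear form attains its maximal
  modulus \<open>\<bar>s\<bar>\<close> at independent unit vectors \<open>u, v\<close> is traceless: by the equality case of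
  Cauchy--Schwarz, \<open>u + v\<close> and \<open>u - v\<close> are eigenvectors for \<open>s\<close> and \<open>-s\<close>. Applied to the
  trilinear restrictions of \<open>T\<close>, this shows that the value \<open>a\<close> stays attainable at an
  independent pair in the first two slots when any other slot is changed to an arbitrary unit
  vector; changing them to basis vectors, the traceless conclusion is the claim.\<close>

definition vec2 :: "real \<Rightarrow> real \<Rightarrow> nat \<Rightarrow> real" where
  "vec2 a b = (\<lambda>i. if i = 1 then a else b)"

lemma vec2_simps [simp]: "vec2 a b 1 = a" "vec2 a b 2 = b" "vec2 a b (Suc 0) = a"
  by (auto simp: vec2_def)

definition det2 :: "(nat \<Rightarrow> real) \<Rightarrow> (nat \<Rightarrow> real) \<Rightarrow> real" where
  "det2 u v = u 1 * v 2 - u 2 * v 1"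

definition sym_form2 :: "real \<Rightarrow> real \<Rightarrow> real \<Rightarrow> (nat \<Rightarrow> real) \<Rightarrow> (nat \<Rightarrow> real) \<Rightarrow> real" where
  "sym_form2 p m r u v = u 1 * v 1 * p + (u 1 * v 2 + u 2 * v 1) * m + u 2 * v 2 * r"

lemma on_S1_nonzero: "on_S1 u \<Longrightarrow> u 1 \<noteq> 0 \<or> u 2 \<noteq> 0"
  by (auto simp: on_S1_def)

lemma on_S1_vec2_divide:
  assumes "a\<^sup>2 + b\<^sup>2 = s\<^sup>2" "s \<noteq> 0"
  shows "on_S1 (vec2 (a / s) (b / s))"
  using assms by (simp add: on_S1_def power_divide add_divide_distrib[symmetric])

lemma on_S1_diagonals:
  "on_S1 (vec2 (1 / sqrt 2) (1 / sqrt 2))" "on_S1 (vec2 (1 / sqrt 2) (- 1 / sqrt 2))"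
  by (simp_all add: on_S1_def power_divide)

text \<open>Equality case of Cauchy--Schwarz.\<close>
lemma linear_form_peak_on_S1:
  assumes bound: "\<And>u. on_S1 u \<Longrightarrow> \<bar>u 1 * w1 + u 2 * w2\<bar> \<le> \<bar>s\<bar>"
    and u0: "on_S1 u0" and val: "u0 1 * w1 + u0 2 * w2 = s"
  shows "w1 = s * u0 1 \<and> w2 = s * u0 2"
proof -
  have norm_w: "w1\<^sup>2 + w2\<^sup>2 \<le> s\<^sup>2"
  proof (cases "w1\<^sup>2 + w2\<^sup>2 = 0")
    case False
    define n where "n = sqrt (w1\<^sup>2 + w2\<^sup>2)"
    have "n > 0" "n\<^sup>2 = w1\<^sup>2 + w2\<^sup>2"
      using False by (simp_all add: n_def sum_power2_gt_zero_iff)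
    moreover have "(w1 / n) * w1 + (w2 / n) * w2 = n"
      using \<open>n > 0\<close> \<open>n\<^sup>2 = _\<close> by (simp add: field_simps power2_eq_square)
    ultimately have "n \<le> \<bar>s\<bar>"
      using bound[OF on_S1_vec2_divide[of w1 w2 n]] by simp
    then show ?thesis
      using \<open>n > 0\<close> \<open>n\<^sup>2 = _\<close> by (metis abs_le_square_iff abs_of_pos)
  qed simp
  have "(w1 - s * u0 1)\<^sup>2 + (w2 - s * u0 2)\<^sup>2
      = (w1\<^sup>2 + w2\<^sup>2) - 2 * s * (u0 1 * w1 + u0 2 * w2) + s\<^sup>2 * ((u0 1)\<^sup>2 + (u0 2)\<^sup>2)"
    by (simp add: power2_eq_square algebra_simps)
  also have "\<dots> = (w1\<^sup>2 + w2\<^sup>2) - s\<^sup>2"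
    using val u0 by (simp add: on_S1_def power2_eq_square)
  finally have "(w1 - s * u0 1)\<^sup>2 + (w2 - s * u0 2)\<^sup>2 \<le> 0"
    using norm_w by simp
  then show ?thesis
    by (smt (verit) zero_le_power2 power_eq_0_iff)
qed

lemma eigenvalue_char_poly:
  assumes "(p - l) * w1 + m * w2 = 0" "m * w1 + (r - l) * w2 = 0" "w1 \<noteq> 0 \<or> w2 \<noteq> 0"
  shows "(p - l) * (r - l) = (m::real)\<^sup>2"
proof -
  have "((p - l) * (r - l) - m\<^sup>2) * w1 = (r - l) * ((p - l) * w1 + m * w2) - m * (m * w1 + (r - l) * w2)"
       "((p - l) * (r - l) - m\<^sup>2) * w2 = (p - l) * (m * w1 + (r - l) * w2) - m * ((p - l) * w1 + m * w2)"
    by (simp_all add: power2_eq_square algebra_simps)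
  then show ?thesis
    using assms by auto
qed

text \<open>If the form attains its maximal modulus \<open>\<bar>s\<bar>\<close> at independent unit vectors \<open>u\<^sub>0, v\<^sub>0\<close>,
  then \<open>M v\<^sub>0 = s u\<^sub>0\<close> and \<open>M u\<^sub>0 = s v\<^sub>0\<close>, so \<open>u\<^sub>0 \<pm> v\<^sub>0\<close> are eigenvectors for \<open>\<pm>s\<close>.\<close>
lemma sym_form2_peak_traceless:
  assumes bound: "\<And>u v. on_S1 u \<Longrightarrow> on_S1 v \<Longrightarrow> \<bar>sym_form2 p m r u v\<bar> \<le> \<bar>s\<bar>"
    and u0: "on_S1 u0" and v0: "on_S1 v0" and indep: "det2 u0 v0 \<noteq> 0"
    and val: "sym_form2 p m r u0 v0 = s" and "s \<noteq> 0"
  shows "r = - p \<and> p\<^sup>2 + m\<^sup>2 = s\<^sup>2"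
proof -
  have Mv0: "p * v0 1 + m * v0 2 = s * u0 1 \<and> m * v0 1 + r * v0 2 = s * u0 2"
  proof (rule linear_form_peak_on_S1[OF _ u0])
    show "\<bar>u 1 * (p * v0 1 + m * v0 2) + u 2 * (m * v0 1 + r * v0 2)\<bar> \<le> \<bar>s\<bar>" if "on_S1 u" for u
      using bound[OF that v0] by (simp add: sym_form2_def algebra_simps)
  qed (use val in \<open>simp add: sym_form2_def algebra_simps\<close>)
  have Mu0: "p * u0 1 + m * u0 2 = s * v0 1 \<and> m * u0 1 + r * u0 2 = s * v0 2"
  proof (rule linear_form_peak_on_S1[OF _ v0])
    show "\<bar>v 1 * (p * u0 1 + m * u0 2) + v 2 * (m * u0 1 + r * u0 2)\<bar> \<le> \<bar>s\<bar>" if "on_S1 v" for v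
      using bound[OF u0 that] by (simp add: sym_form2_def algebra_simps)
  qed (use val in \<open>simp add: sym_form2_def algebra_simps\<close>)
  have "u0 1 + v0 1 \<noteq> 0 \<or> u0 2 + v0 2 \<noteq> 0"
  proof (rule ccontr)
    assume "\<not> ?thesis"
    then have "v0 1 = - u0 1" "v0 2 = - u0 2" by auto
    then show False using indep by (simp add: det2_def)
  qed
  moreover have "u0 1 - v0 1 \<noteq> 0 \<or> u0 2 - v0 2 \<noteq> 0"
  proof (rule ccontr)
    assume "\<not> ?thesis"
    then have "v0 1 = u0 1" "v0 2 = u0 2" by auto
    then show False using indep by (simp add: det2_def)
  qed
  ultimately have "(p - s) * (r - s) = m\<^sup>2" "(p + s) * (r + s) = m\<^sup>2"
    using eigenvalue_char_poly[of p s "u0 1 + v0 1" m "u0 2 + v0 2" r]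
      eigenvalue_char_poly[of p "- s" "u0 1 - v0 1" m "u0 2 - v0 2" r] Mv0 Mu0
    by (simp_all add: algebra_simps)
  then have "2 * s * (p + r) = 0"
    by (simp add: algebra_simps)
  with \<open>s \<noteq> 0\<close> have "r = - p"
    by simp
  with \<open>(p - s) * (r - s) = m\<^sup>2\<close> show ?thesis
    by (simp add: power2_eq_square algebra_simps)
qed

text \<open>A traceless symmetric matrix \<open>M\<close> with \<open>p\<^sup>2 + m\<^sup>2 = s\<^sup>2\<close> is \<open>s\<close> times the reflection below.\<close>
definition reflection2 :: "real \<Rightarrow> real \<Rightarrow> real \<Rightarrow> (nat \<Rightarrow> real) \<Rightarrow> nat \<Rightarrow> real" where
  "reflection2 p m s v = vec2 ((p * v 1 + m * v 2) / s) ((m * v 1 - p * v 2) / s)"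

context
  fixes p m s :: real
  assumes pm: "p\<^sup>2 + m\<^sup>2 = s\<^sup>2" and s: "s \<noteq> 0"
begin

lemma reflection2_sq_norm:
  "(p * v 1 + m * v 2)\<^sup>2 + (m * v 1 - p * v 2)\<^sup>2 = s\<^sup>2 * ((v 1)\<^sup>2 + (v 2)\<^sup>2)"
  unfolding pm[symmetric] by (simp add: power2_eq_square algebra_simps)

lemma on_S1_reflection2: "on_S1 v \<Longrightarrow> on_S1 (reflection2 p m s v)"
  unfolding reflection2_def
  by (rule on_S1_vec2_divide[OF _ s]) (use reflection2_sq_norm[of v] in \<open>simp add: on_S1_def\<close>)

lemma sym_form2_reflection2:
  assumes "on_S1 v"
  shows "sym_form2 p m (- p) (reflection2 p m s v) v = s"
proof -
  have "sym_form2 p m (- p) (reflection2 p m s v) v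
      = ((p * v 1 + m * v 2)\<^sup>2 + (m * v 1 - p * v 2)\<^sup>2) / s"
    by (simp add: reflection2_def sym_form2_def power2_eq_square add_divide_distrib diff_divide_distrib
        algebra_simps)
  also have "\<dots> = s"
    using reflection2_sq_norm[of v] assms s by (simp add: on_S1_def power2_eq_square)
  finally show ?thesis .
qed

lemma det2_reflection2: "det2 (reflection2 p m s u) (reflection2 p m s v) = - det2 u v"
proof -
  have "det2 (reflection2 p m s u) (reflection2 p m s v) * s\<^sup>2 = - (p\<^sup>2 + m\<^sup>2) * det2 u v"
    using s by (simp add: reflection2_def det2_def power2_eq_square field_simps)
  then have "det2 (reflection2 p m s u) (reflection2 p m s v) * s\<^sup>2 = - det2 u v * s\<^sup>2"
    by (simp add: pm)
  then show ?thesis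
    using s by (metis mult_cancel_right mult_minus_left power_eq_0_iff)
qed

lemma sym_form2_attains_at_independent_pair:
  "\<exists>u v. on_S1 u \<and> on_S1 v \<and> det2 u v \<noteq> 0 \<and> sym_form2 p m (- p) u v = s"
proof -
  define h :: real where "h = 1 / sqrt 2"
  have "h * h = 1 / 2"
    by (simp add: h_def)
  then have "det2 (reflection2 p m s (vec2 1 0)) (vec2 1 0) = - m / s"
       "det2 (reflection2 p m s (vec2 h h)) (vec2 h h) = p / s"
    by (simp_all add: reflection2_def det2_def diff_divide_distrib[symmetric] algebra_simps)
  moreover have "p \<noteq> 0 \<or> m \<noteq> 0"
    using pm s by auto
  moreover have "on_S1 (vec2 1 0)" "on_S1 (vec2 h h)"
    using on_S1_diagonals by (simp_all add: on_S1_def h_def)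
  ultimately show ?thesis
    using s on_S1_reflection2 sym_form2_reflection2 by (metis divide_eq_0_iff neg_equal_0_iff_equal)
qed

end

text \<open>The symmetric trilinear form on \<open>\<real>\<^sup>2\<close> whose values on basis vectors with \<open>k\<close> entries equal
  to \<open>e\<^sub>2\<close> are \<open>s\<^sub>k\<close>.\<close>
definition sym_form3 :: "real \<Rightarrow> real \<Rightarrow> real \<Rightarrow> real \<Rightarrow>
    (nat \<Rightarrow> real) \<Rightarrow> (nat \<Rightarrow> real) \<Rightarrow> (nat \<Rightarrow> real) \<Rightarrow> real" where
  "sym_form3 s0 s1 s2 s3 a b c = a 1 * b 1 * c 1 * s0
     + (a 1 * b 1 * c 2 + a 1 * b 2 * c 1 + a 2 * b 1 * c 1) * s1
     + (a 1 * b 2 * c 2 + a 2 * b 1 * c 2 + a 2 * b 2 * c 1) * s2 + a 2 * b 2 * c 2 * s3"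

lemma sym_form3_swap23: "sym_form3 s0 s1 s2 s3 a b c = sym_form3 s0 s1 s2 s3 a c b"
  by (simp add: sym_form3_def algebra_simps)

lemma sym_form3_eq_sym_form2:
  "sym_form3 s0 s1 s2 s3 a b c = sym_form2 (c 1 * s0 + c 2 * s1) (c 1 * s1 + c 2 * s2) (c 1 * s2 + c 2 * s3) a b"
  by (simp add: sym_form3_def sym_form2_def algebra_simps)

lemma det2_eq_0_trans:
  assumes "det2 a c = 0" "det2 b c = 0" "on_S1 c"
  shows "det2 a b = 0"
proof -
  have "c 1 * det2 a b = b 1 * det2 a c - a 1 * det2 b c"
       "c 2 * det2 a b = b 2 * det2 a c - a 2 * det2 b c"
    by (simp_all add: det2_def algebra_simps)
  then have "c 1 * det2 a b = 0" "c 2 * det2 a b = 0"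
    using assms(1,2) by simp_all
  then show ?thesis
    using on_S1_nonzero[OF assms(3)] by auto
qed

lemma linear_form_vanishing_off_line:
  assumes vanish: "\<And>v. on_S1 v \<Longrightarrow> det2 (f v) c \<noteq> 0 \<Longrightarrow> v 1 * \<alpha> + v 2 * \<beta> = 0"
    and line: "\<And>x y. det2 (f x) c = 0 \<Longrightarrow> det2 (f y) c = 0 \<Longrightarrow> det2 x y = 0"
  shows "\<alpha> = 0 \<and> \<beta> = (0::real)"
proof -
  define h :: real where "h = 1 / sqrt 2"
  have units: "on_S1 (vec2 1 0)" "on_S1 (vec2 0 1)" "on_S1 (vec2 h h)" "on_S1 (vec2 h (- h))"
    using on_S1_diagonals by (simp_all add: on_S1_def h_def)
  have "h \<noteq> 0"
    by (simp add: h_def)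
  then consider "det2 (f (vec2 1 0)) c \<noteq> 0" "det2 (f (vec2 0 1)) c \<noteq> 0"
    | "det2 (f (vec2 h h)) c \<noteq> 0" "det2 (f (vec2 h (- h))) c \<noteq> 0"
    using line by (fastforce simp: det2_def)
  then show ?thesis
  proof cases
    case 1
    then show ?thesis
      using vanish[OF units(1)] vanish[OF units(2)] by simp
  next
    case 2
    then have "h * (\<alpha> + \<beta>) = 0" "h * (\<alpha> - \<beta>) = 0"
      using vanish[OF units(3)] vanish[OF units(4)] by (simp_all add: algebra_simps)
    with \<open>h \<noteq> 0\<close> show ?thesis
      by simp
  qed
qed

context
  fixes s0 s1 s2 s3 s :: real and u0 v0 c0 :: "nat \<Rightarrow> real"
  assumes bound: "\<And>a b c. on_S1 a \<Longrightarrow> on_S1 b \<Longrightarrow> on_S1 c \<Longrightarrow> \<bar>sym_form3 s0 s1 s2 s3 a b c\<bar> \<le> \<bar>s\<bar>"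
    and u0: "on_S1 u0" and v0: "on_S1 v0" and c0: "on_S1 c0" and indep: "det2 u0 v0 \<noteq> 0"
    and val: "sym_form3 s0 s1 s2 s3 u0 v0 c0 = s" and s: "s \<noteq> 0"
begin

text \<open>The contraction \<open>M(c\<^sub>0)\<close> is \<open>s\<close> times a reflection \<open>R\<close>; then \<open>(R v, v, c\<^sub>0)\<close> is a peak
  for every unit \<open>v\<close>, so the contraction \<open>M(v)\<close> is traceless whenever \<open>R v\<close> and \<open>c\<^sub>0\<close> are
  independent, which fails for at most one line of \<open>v\<close>.\<close>
lemma sym_form3_peak_traceless: "s2 = - s0 \<and> s3 = - s1 \<and> s0\<^sup>2 + s1\<^sup>2 = s\<^sup>2"
proof -
  define p m where "p = c0 1 * s0 + c0 2 * s1" and "m = c0 1 * s1 + c0 2 * s2"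
  have "c0 1 * s2 + c0 2 * s3 = - p \<and> p\<^sup>2 + m\<^sup>2 = s\<^sup>2"
    unfolding p_def m_def
  proof (rule sym_form2_peak_traceless[OF _ u0 v0 indep _ s])
    show "\<bar>sym_form2 (c0 1 * s0 + c0 2 * s1) (c0 1 * s1 + c0 2 * s2) (c0 1 * s2 + c0 2 * s3) a b\<bar> \<le> \<bar>s\<bar>"
      if "on_S1 a" "on_S1 b" for a b
      using bound[OF that c0] by (simp add: sym_form3_eq_sym_form2)
  qed (use val in \<open>simp add: sym_form3_eq_sym_form2\<close>)
  then have M_c0: "sym_form3 s0 s1 s2 s3 a b c0 = sym_form2 p m (- p) a b" and pm: "p\<^sup>2 + m\<^sup>2 = s\<^sup>2"
    for a b
    by (simp_all add: sym_form3_eq_sym_form2 p_def m_def)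
  let ?R = "reflection2 p m s"
  have trace_v: "v 1 * (s0 + s2) + v 2 * (s1 + s3) = 0"
    if v: "on_S1 v" and indep_v: "det2 (?R v) c0 \<noteq> 0" for v
  proof -
    have "v 1 * s2 + v 2 * s3 = - (v 1 * s0 + v 2 * s1) \<and> (v 1 * s0 + v 2 * s1)\<^sup>2 + (v 1 * s1 + v 2 * s2)\<^sup>2 = s\<^sup>2"
    proof (rule sym_form2_peak_traceless[OF _ on_S1_reflection2[OF pm s v] c0 indep_v _ s])
      show "\<bar>sym_form2 (v 1 * s0 + v 2 * s1) (v 1 * s1 + v 2 * s2) (v 1 * s2 + v 2 * s3) a c\<bar> \<le> \<bar>s\<bar>"
        if "on_S1 a" "on_S1 c" for a c
        using bound[OF that(1) v that(2)] by (metis sym_form3_eq_sym_form2 sym_form3_swap23)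
      show "sym_form2 (v 1 * s0 + v 2 * s1) (v 1 * s1 + v 2 * s2) (v 1 * s2 + v 2 * s3) (?R v) c0 = s"
        using sym_form2_reflection2[OF pm s v] M_c0
        by (metis sym_form3_eq_sym_form2 sym_form3_swap23)
    qed
    then show ?thesis
      by (simp add: algebra_simps)
  qed
  have R_degenerate_unique: "det2 x y = 0"
    if "det2 (?R x) c0 = 0" "det2 (?R y) c0 = 0" for x y
    using det2_eq_0_trans[OF that c0] det2_reflection2[OF pm s] by simp
  have "s0 + s2 = 0 \<and> s1 + s3 = 0"
    by (rule linear_form_vanishing_off_line[OF trace_v R_degenerate_unique])
  moreover have "p\<^sup>2 + m\<^sup>2 = (s0\<^sup>2 + s1\<^sup>2) * ((c0 1)\<^sup>2 + (c0 2)\<^sup>2)" if "s2 = - s0"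
    by (simp add: p_def m_def that power2_eq_square algebra_simps)
  ultimately show ?thesis
    using pm c0 by (simp add: on_S1_def)
qed

lemma sym_form3_peak_propagates:
  assumes "on_S1 w"
  shows "\<exists>u v. on_S1 u \<and> on_S1 v \<and> det2 u v \<noteq> 0 \<and> sym_form3 s0 s1 s2 s3 u v w = s"
proof -
  define p m where "p = w 1 * s0 + w 2 * s1" and "m = w 1 * s1 - w 2 * s0"
  have traceless: "s2 = - s0" "s3 = - s1" and norm: "s0\<^sup>2 + s1\<^sup>2 = s\<^sup>2"
    using sym_form3_peak_traceless by simp_all
  have "sym_form3 s0 s1 s2 s3 u v w = sym_form2 p m (- p) u v" for u v
    by (simp add: sym_form3_eq_sym_form2 traceless p_def m_def algebra_simps)
  moreover have "p\<^sup>2 + m\<^sup>2 = (s0\<^sup>2 + s1\<^sup>2) * ((w 1)\<^sup>2 + (w 2)\<^sup>2)"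
    by (simp add: p_def m_def power2_eq_square algebra_simps)
  then have "p\<^sup>2 + m\<^sup>2 = s\<^sup>2"
    using norm assms by (simp add: on_S1_def)
  ultimately show ?thesis
    using sym_form2_attains_at_independent_pair[OF _ s] by presburger
qed

end

definition tensor_eval :: "nat \<Rightarrow> (nat list \<Rightarrow> real) \<Rightarrow> (nat \<Rightarrow> nat \<Rightarrow> real) \<Rightarrow> real" where
  "tensor_eval d T x = (\<Sum>ks\<in>idx d. T ks * (\<Prod>k<d. x k (ks ! k)))"

definition basis_vec :: "nat \<Rightarrow> nat \<Rightarrow> real" where
  "basis_vec a = (\<lambda>t. if t = a then 1 else 0)"

abbreviation unit_tuple :: "nat \<Rightarrow> (nat \<Rightarrow> nat \<Rightarrow> real) \<Rightarrow> bool" where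
  "unit_tuple d x \<equiv> \<forall>k<d. on_S1 (x k)"

lemma on_S1_basis_vec: "a \<in> {1, 2} \<Longrightarrow> on_S1 (basis_vec a)"
  by (auto simp: basis_vec_def on_S1_def)

lemma idx_0: "idx 0 = {[]}"
  by (auto simp: idx_def)

lemma idx_Suc: "idx (Suc d) = (\<lambda>(i, ks). i # ks) ` ({1, 2} \<times> idx d)"
proof
  show "idx (Suc d) \<subseteq> (\<lambda>(i, ks). i # ks) ` ({1, 2} \<times> idx d)"
  proof
    fix xs assume "xs \<in> idx (Suc d)"
    then obtain i ks where "xs = i # ks" "i \<in> {1, 2}" "ks \<in> idx d"
      by (cases xs) (auto simp: idx_def)
    then show "xs \<in> (\<lambda>(i, ks). i # ks) ` ({1, 2} \<times> idx d)"
      by force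
  qed
qed (auto simp: idx_def)

lemma finite_idx: "finite (idx d)"
  by (induction d) (auto simp: idx_0 idx_Suc)

lemma nth_idx: "ks \<in> idx d \<Longrightarrow> k < d \<Longrightarrow> ks ! k \<in> {1, 2}"
  unfolding idx_def by (auto dest: nth_mem)

lemma sum_idx_prod:
  fixes g :: "nat \<Rightarrow> nat \<Rightarrow> real"
  shows "(\<Sum>ks\<in>idx d. \<Prod>k<d. g k (ks ! k)) = (\<Prod>k<d. g k 1 + g k 2)"
proof (induction d arbitrary: g)
  case 0
  then show ?case
    by (simp add: idx_0)
next
  case (Suc d)
  have inj: "inj_on (\<lambda>(i, ks). i # ks) ({1::nat, 2} \<times> idx d)"
    by (auto simp: inj_on_def)
  have "(\<Sum>ks\<in>idx (Suc d). \<Prod>k<Suc d. g k (ks ! k))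
      = (\<Sum>(i, ks)\<in>{1, 2} \<times> idx d. g 0 i * (\<Prod>k<d. g (Suc k) (ks ! k)))"
    unfolding idx_Suc sum.reindex[OF inj]
    by (simp add: case_prod_beta prod.lessThan_Suc_shift del: prod.lessThan_Suc)
  also have "\<dots> = (\<Sum>i\<in>{1::nat, 2}. g 0 i * (\<Sum>ks\<in>idx d. \<Prod>k<d. g (Suc k) (ks ! k)))"
    by (simp add: sum.cartesian_product[symmetric] sum_distrib_left)
  also have "\<dots> = (\<Prod>k<Suc d. g k 1 + g k 2)"
    using Suc.IH[of "\<lambda>k. g (Suc k)"]
    by (simp add: prod.lessThan_Suc_shift algebra_simps del: prod.lessThan_Suc)
  finally show ?case .
qed

lemma tensor_eval_cong: "(\<And>k. k < d \<Longrightarrow> x k = y k) \<Longrightarrow> tensor_eval d T x = tensor_eval d T y"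
  unfolding tensor_eval_def by (intro sum.cong refl arg_cong2[where f = "(*)"] prod.cong) auto

lemma tensor_eval_fun_upd:
  assumes "i < d"
  shows "tensor_eval d T (x(i := u))
    = u 1 * tensor_eval d T (x(i := basis_vec 1)) + u 2 * tensor_eval d T (x(i := basis_vec 2))"
proof -
  have prod_upd: "(\<Prod>k<d. (x(i := v)) k (ks ! k)) = v (ks ! i) * (\<Prod>k\<in>{..<d} - {i}. x k (ks ! k))"
    for v ks
    using assms by (subst prod.remove[of _ i]) (auto intro!: prod.cong)
  have "u (ks ! i) = u 1 * basis_vec 1 (ks ! i) + u 2 * basis_vec 2 (ks ! i)" if "ks \<in> idx d" for ks
    using nth_idx[OF that assms] by (auto simp: basis_vec_def)
  then show ?thesis
    unfolding tensor_eval_def prod_upd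
    by (simp add: algebra_simps sum.distrib sum_distrib_left cong: sum.cong)
qed

lemma tensor_eval_transpose:
  assumes sym: "sym_tensor d T" and "i < d" "j < d"
  shows "tensor_eval d T (x \<circ> transpose i j) = tensor_eval d T x"
proof -
  let ?p = "transpose i j"
  let ?g = "permute_list ?p"
  have p: "?p permutes {..<d}"
    using assms by (intro permutes_swap_id) auto
  have mset_g: "mset (?g ks) = mset ks" if "ks \<in> idx d" for ks
    using p that by (simp add: idx_def)
  have g_idx: "?g ks \<in> idx d" if "ks \<in> idx d" for ks
    using that mset_g[OF that] unfolding idx_def by (metis mem_Collect_eq mset_eq_length set_mset_mset)
  have g_g: "?g (?g ks) = ks" if "ks \<in> idx d" for ks
  proof -
    have "?g (?g ks) = permute_list (?p \<circ> ?p) ks"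
      using p that by (intro permute_list_compose[symmetric]) (auto simp: idx_def)
    then show ?thesis
      by (simp add: comp_def)
  qed
  have summand: "T (?g ks) * (\<Prod>k<d. x k (?g ks ! k)) = T ks * (\<Prod>k<d. x (?p k) (ks ! k))"
    if "ks \<in> idx d" for ks
  proof -
    have "T (?g ks) = T ks"
      using sym that mset_g[OF that] unfolding sym_tensor_def by blast
    moreover have "(\<Prod>k<d. x k (?g ks ! k)) = (\<Prod>k<d. x k (ks ! ?p k))"
      using p that by (intro prod.cong refl) (simp add: permute_list_nth idx_def)
    moreover have "\<dots> = (\<Prod>k<d. x (?p k) (ks ! k))"
      using prod.permute[OF p, of "\<lambda>k. x k (ks ! ?p k)"] by (simp add: comp_def)
    ultimately show ?thesis
      by simp
  qed
  show ?thesis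
    unfolding tensor_eval_def
    by (rule sum.reindex_bij_witness[of _ ?g ?g]) (auto simp: g_idx g_g summand)
qed

lemma tensor_eval_fun_upd_swap:
  assumes "sym_tensor d T" "i < d" "j < d" "i \<noteq> j"
  shows "tensor_eval d T (x(i := u, j := v)) = tensor_eval d T (x(i := v, j := u))"
proof -
  have "x(i := u, j := v) \<circ> transpose i j = x(i := v, j := u)"
    using assms(4) by (auto simp: fun_eq_iff transpose_def)
  then show ?thesis
    using tensor_eval_transpose[OF assms(1-3), of "x(i := u, j := v)"] by simp
qed

lemma tensor_eval_basis:
  assumes "is \<in> idx d"
  shows "tensor_eval d T (\<lambda>k. basis_vec (is ! k)) = T is"
proof -
  have "T ks * (\<Prod>k<d. basis_vec (is ! k) (ks ! k)) = (if ks = is then T is else 0)"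
    if "ks \<in> idx d" for ks
  proof (cases "ks = is")
    case False
    have "length ks = d" "length is = d"
      using that assms by (auto simp: idx_def)
    with False obtain k where "k < d" "ks ! k \<noteq> is ! k"
      by (metis nth_equalityI)
    then show ?thesis
      using False by (auto simp: basis_vec_def intro!: prod_zero)
  qed (simp add: basis_vec_def)
  then show ?thesis
    using assms finite_idx unfolding tensor_eval_def by (simp cong: sum.cong)
qed

lemma tensor_eval_sym_form2:
  assumes sym: "sym_tensor d T" and "1 < d"
  shows "tensor_eval d T (y(0 := u, 1 := v)) = sym_form2
    (tensor_eval d T (y(0 := basis_vec 1, 1 := basis_vec 1)))
    (tensor_eval d T (y(0 := basis_vec 1, 1 := basis_vec 2)))
    (tensor_eval d T (y(0 := basis_vec 2, 1 := basis_vec 2))) u v"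
proof -
  let ?G = "\<lambda>a b. tensor_eval d T (y(0 := a, 1 := b))"
  have lin0: "?G a b = a 1 * ?G (basis_vec 1) b + a 2 * ?G (basis_vec 2) b" for a b
  proof -
    have "y(0 := c, 1 := b) = (y(1 := b))(0 := c)" for c
      by (auto simp: fun_eq_iff)
    then show ?thesis
      using tensor_eval_fun_upd[of 0 d T "y(1 := b)" a] assms(2) by simp
  qed
  have lin1: "?G a b = b 1 * ?G a (basis_vec 1) + b 2 * ?G a (basis_vec 2)" for a b
    using tensor_eval_fun_upd[of 1 d T "y(0 := a)" b] assms(2) by simp
  have "?G (basis_vec 2) (basis_vec 1) = ?G (basis_vec 1) (basis_vec 2)"
    using tensor_eval_fun_upd_swap[OF sym, of 0 1] assms(2) by simp
  then show ?thesis
    using lin0[of u v] lin1[of "basis_vec 1" v] lin1[of "basis_vec 2" v]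
    by (simp add: sym_form2_def algebra_simps)
qed

lemma tensor_eval_sym_form3:
  assumes sym: "sym_tensor d T" and k: "2 \<le> k" "k < d"
  shows "tensor_eval d T (y(0 := a, 1 := b, k := c)) = sym_form3
    (tensor_eval d T (y(0 := basis_vec 1, 1 := basis_vec 1, k := basis_vec 1)))
    (tensor_eval d T (y(0 := basis_vec 1, 1 := basis_vec 1, k := basis_vec 2)))
    (tensor_eval d T (y(0 := basis_vec 1, 1 := basis_vec 2, k := basis_vec 2)))
    (tensor_eval d T (y(0 := basis_vec 2, 1 := basis_vec 2, k := basis_vec 2))) a b c"
proof -
  let ?G = "\<lambda>a b c. tensor_eval d T (y(0 := a, 1 := b, k := c))"
  let ?e1 = "basis_vec 1" and ?e2 = "basis_vec 2"
  have upd_k_first: "y(0 := a, 1 := b, k := c) = (y(k := c))(0 := a, 1 := b)" for a b c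
    using k by (auto simp: fun_eq_iff)
  have bilin: "?G a b c = sym_form2 (?G ?e1 ?e1 c) (?G ?e1 ?e2 c) (?G ?e2 ?e2 c) a b" for a b c
    unfolding upd_k_first using tensor_eval_sym_form2[OF sym, of "y(k := c)" a b] k by simp
  have lin: "?G a b c = c 1 * ?G a b ?e1 + c 2 * ?G a b ?e2" for a b c
    using tensor_eval_fun_upd[of k d T "y(0 := a, 1 := b)" c] k by simp
  have "?G ?e1 ?e2 ?e1 = ?G ?e1 ?e1 ?e2"
    using tensor_eval_fun_upd_swap[OF sym, of 1 k "y(0 := ?e1)" ?e2 ?e1] k by simp
  moreover have "?G ?e2 ?e2 ?e1 = ?G ?e1 ?e2 ?e2"
  proof -
    have "y(0 := a, 1 := ?e2, k := c) = (y(1 := ?e2))(0 := a, k := c)" for a c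
      using k by (auto simp: fun_eq_iff)
    then show ?thesis
      using tensor_eval_fun_upd_swap[OF sym, of 0 k "y(1 := ?e2)" ?e2 ?e1] k by simp
  qed
  ultimately show ?thesis
    using bilin[of a b c] lin[of ?e1 ?e1 c] lin[of ?e1 ?e2 c] lin[of ?e2 ?e2 c]
    by (simp add: sym_form3_eq_sym_form2)
qed

lemma sum_sq_rank_one:
  assumes "unit_tuple d y"
  shows "(\<Sum>ks\<in>idx d. (rank_one d s y ks)\<^sup>2) = s\<^sup>2"
proof -
  have "(\<Sum>ks\<in>idx d. (rank_one d s y ks)\<^sup>2) = s\<^sup>2 * (\<Sum>ks\<in>idx d. \<Prod>k<d. (y k (ks ! k))\<^sup>2)"
    by (simp add: rank_one_def power_mult_distrib prod_power_distrib sum_distrib_left)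
  also have "(\<Sum>ks\<in>idx d. \<Prod>k<d. (y k (ks ! k))\<^sup>2) = (\<Prod>k<d. (y k 1)\<^sup>2 + (y k 2)\<^sup>2)"
    by (rule sum_idx_prod)
  also have "\<dots> = 1"
    using assms by (intro prod.neutral) (auto simp: on_S1_def)
  finally show ?thesis
    by simp
qed

lemma sum_sq_diff_rank_one:
  assumes "unit_tuple d y"
  shows "(\<Sum>ks\<in>idx d. (T ks - rank_one d s y ks)\<^sup>2)
    = (\<Sum>ks\<in>idx d. (T ks)\<^sup>2) - 2 * s * tensor_eval d T y + s\<^sup>2"
proof -
  have "(\<Sum>ks\<in>idx d. (T ks - rank_one d s y ks)\<^sup>2) = (\<Sum>ks\<in>idx d. (T ks)\<^sup>2)
      - 2 * (\<Sum>ks\<in>idx d. T ks * rank_one d s y ks) + (\<Sum>ks\<in>idx d. (rank_one d s y ks)\<^sup>2)"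
    by (simp add: power2_diff sum.distrib sum_subtractf sum_distrib_left mult.assoc)
  also have "(\<Sum>ks\<in>idx d. T ks * rank_one d s y ks) = s * tensor_eval d T y"
    by (simp add: tensor_eval_def rank_one_def sum_distrib_left algebra_simps)
  finally show ?thesis
    using sum_sq_rank_one[OF assms] by simp
qed

text \<open>Since the squared distance to \<open>s y\<^sub>0 \<otimes> \<dots> \<otimes> y\<^sub>d\<^sub>-\<^sub>1\<close> is
  \<open>\<parallel>T\<parallel>\<^sup>2 - tensor_eval d T y\<^sup>2 + (s - tensor_eval d T y)\<^sup>2\<close>, a best approximation maximizes
  \<open>\<bar>tensor_eval d T y\<bar>\<close> over unit tuples and has that value as its coefficient.\<close>
lemma best_rank_one_approx_peak:
  assumes best: "best_rank_one_approx d T a x"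
  shows best_rank_one_approx_coeff: "a = tensor_eval d T x"
    and best_rank_one_approx_bound: "unit_tuple d y \<Longrightarrow> \<bar>tensor_eval d T y\<bar> \<le> \<bar>a\<bar>"
proof -
  define N where "N = (\<Sum>ks\<in>idx d. (T ks)\<^sup>2)"
  have x: "unit_tuple d x"
    using best by (simp add: best_rank_one_approx_def)
  have tnorm: "tnorm d (\<lambda>ks. T ks - rank_one d s y ks) = sqrt (N - 2 * s * tensor_eval d T y + s\<^sup>2)"
    if "unit_tuple d y" for s y
    using sum_sq_diff_rank_one[OF that] by (simp add: tnorm_def N_def)
  have opt: "N - 2 * a * tensor_eval d T x + a\<^sup>2 \<le> N - 2 * s * tensor_eval d T y + s\<^sup>2"
    if "unit_tuple d y" for s y
  proof -
    have "tnorm d (\<lambda>ks. T ks - rank_one d a x ks) \<le> tnorm d (\<lambda>ks. T ks - rank_one d s y ks)"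
      using best that by (simp add: best_rank_one_approx_def)
    then show ?thesis
      unfolding tnorm[OF x] tnorm[OF that] by simp
  qed
  have "(a - tensor_eval d T x)\<^sup>2 \<le> 0"
    using opt[OF x, of "tensor_eval d T x"] by (simp add: power2_eq_square algebra_simps)
  then show coeff: "a = tensor_eval d T x"
    by simp
  assume "unit_tuple d y"
  then have "(tensor_eval d T y)\<^sup>2 \<le> a\<^sup>2"
    using opt[of y "tensor_eval d T y"] coeff by (simp add: power2_eq_square algebra_simps)
  then show "\<bar>tensor_eval d T y\<bar> \<le> \<bar>a\<bar>"
    by (simp add: abs_le_square_iff)
qed

lemma rank_one_sym_if_parallel:
  assumes "0 < d" and x: "unit_tuple d x" and parallel: "\<forall>j<d. det2 (x 0) (x j) = 0"
  shows "sym_tensor d (rank_one d a x)"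
proof -
  define l where "l k = x 0 1 * x k 1 + x 0 2 * x k 2" for k
  have x0: "(x 0 1)\<^sup>2 + (x 0 2)\<^sup>2 = 1"
    using x assms(1) by (simp add: on_S1_def)
  have comp: "x k t = l k * x 0 t" if "k < d" "t \<in> {1, 2}" for k t
  proof -
    have "l k * x 0 1 - x k 1 = x 0 2 * det2 (x 0) (x k) + ((x 0 1)\<^sup>2 + (x 0 2)\<^sup>2 - 1) * x k 1"
         "l k * x 0 2 - x k 2 = - x 0 1 * det2 (x 0) (x k) + ((x 0 1)\<^sup>2 + (x 0 2)\<^sup>2 - 1) * x k 2"
      by (simp_all add: l_def det2_def power2_eq_square algebra_simps)
    then show ?thesis
      using that x0 parallel by auto
  qed
  have prod_eq: "(\<Prod>k<d. x k (ks ! k)) = (\<Prod>k<d. l k) * prod_mset (image_mset (x 0) (mset ks))"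
    if "ks \<in> idx d" for ks
  proof -
    have "(\<Prod>k<d. x k (ks ! k)) = (\<Prod>k<d. l k * x 0 (ks ! k))"
      by (intro prod.cong refl) (metis comp nth_idx[OF that] lessThan_iff)
    also have "\<dots> = (\<Prod>k<d. l k) * (\<Prod>k<d. x 0 (ks ! k))"
      by (simp add: prod.distrib)
    also have "(\<Prod>k<d. x 0 (ks ! k)) = prod_list (map (x 0) ks)"
      using that by (simp add: prod.list_conv_set_nth atLeast0LessThan idx_def)
    finally show ?thesis
      by (simp add: prod_mset_prod_list[symmetric])
  qed
  show ?thesis
    unfolding sym_tensor_def
  proof (intro ballI allI impI)
    fix ks js assume ks: "ks \<in> idx d" and js_ks: "mset js = mset ks"
    then have "js \<in> idx d"
      unfolding idx_def by (metis mem_Collect_eq mset_eq_length set_mset_mset)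
    show "rank_one d a x js = rank_one d a x ks"
      unfolding rank_one_def prod_eq[OF ks] prod_eq[OF \<open>js \<in> idx d\<close>] js_ks
      by (rule refl)
  qed
qed

definition attains_at_independent_pair ::
    "nat \<Rightarrow> (nat list \<Rightarrow> real) \<Rightarrow> real \<Rightarrow> (nat \<Rightarrow> nat \<Rightarrow> real) \<Rightarrow> bool" where
  "attains_at_independent_pair d T s y \<longleftrightarrow>
     (\<exists>u v. on_S1 u \<and> on_S1 v \<and> det2 u v \<noteq> 0 \<and> tensor_eval d T (y(0 := u, 1 := v)) = s)"

lemma attains_at_independent_pair_cong:
  assumes "attains_at_independent_pair d T s y" "\<And>k. 2 \<le> k \<Longrightarrow> k < d \<Longrightarrow> y k = y' k"
  shows "attains_at_independent_pair d T s y'"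
proof -
  have "tensor_eval d T (y(0 := u, 1 := v)) = tensor_eval d T (y'(0 := u, 1 := v))" for u v
    using assms(2) by (intro tensor_eval_cong) auto
  then show ?thesis
    using assms(1) by (simp add: attains_at_independent_pair_def)
qed

context
  fixes d :: nat and T :: "nat list \<Rightarrow> real" and s :: real
  assumes sym: "sym_tensor d T"
    and bound: "\<And>y. unit_tuple d y \<Longrightarrow> \<bar>tensor_eval d T y\<bar> \<le> \<bar>s\<bar>"
    and s: "s \<noteq> 0"
begin

lemma attains_at_independent_pair_fun_upd:
  assumes att: "attains_at_independent_pair d T s y" and y: "unit_tuple d y"
    and k: "2 \<le> k" "k < d" and w: "on_S1 w"
  shows "attains_at_independent_pair d T s (y(k := w))"
proof -
  let ?e1 = "basis_vec 1" and ?e2 = "basis_vec 2"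
  let ?G = "\<lambda>a b c. tensor_eval d T (y(0 := a, 1 := b, k := c))"
  let ?form = "sym_form3 (?G ?e1 ?e1 ?e1) (?G ?e1 ?e1 ?e2) (?G ?e1 ?e2 ?e2) (?G ?e2 ?e2 ?e2)"
  have G: "?G a b c = ?form a b c" for a b c
    by (rule tensor_eval_sym_form3[OF sym k])
  have form_bound: "\<bar>?form a b c\<bar> \<le> \<bar>s\<bar>" if "on_S1 a" "on_S1 b" "on_S1 c" for a b c
  proof -
    have "unit_tuple d (y(0 := a, 1 := b, k := c))"
      using y that by (simp add: less_Suc_eq_0_disj)
    then show ?thesis
      using bound G[of a b c] by metis
  qed
  obtain u0 v0 where u0: "on_S1 u0" and v0: "on_S1 v0" and indep: "det2 u0 v0 \<noteq> 0"
    and val: "tensor_eval d T (y(0 := u0, 1 := v0)) = s"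
    using att by (auto simp: attains_at_independent_pair_def)
  have "y(0 := u0, 1 := v0, k := y k) = y(0 := u0, 1 := v0)"
    using k by (auto simp: fun_eq_iff)
  then have "?form u0 v0 (y k) = s"
    using G[of u0 v0 "y k"] val by simp
  moreover have "on_S1 (y k)"
    using y k by simp
  ultimately obtain u v where "on_S1 u" "on_S1 v" "det2 u v \<noteq> 0" "?form u v w = s"
    using sym_form3_peak_propagates[OF form_bound u0 v0 _ indep _ s w] by blast
  moreover have "y(0 := u, 1 := v, k := w) = (y(k := w))(0 := u, 1 := v)"
    using k by (auto simp: fun_eq_iff)
  ultimately show ?thesis
    unfolding attains_at_independent_pair_def using G[of u v w] by metis
qed

lemma attains_at_independent_pair_unit_tuple:
  assumes att: "attains_at_independent_pair d T s y" and y: "unit_tuple d y" and z: "unit_tuple d z"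
  shows "attains_at_independent_pair d T s z"
proof -
  define W where "W n = (\<lambda>j. if 2 \<le> j \<and> j < 2 + n then z j else y j)" for n
  have "attains_at_independent_pair d T s (W n)" for n
  proof (induction n)
    case 0
    have "W 0 = y"
      by (auto simp: W_def fun_eq_iff)
    then show ?case
      using att by simp
  next
    case (Suc n)
    show ?case
    proof (cases "2 + n < d")
      case True
      have "unit_tuple d (W n)"
        using y z by (simp add: W_def)
      then have "attains_at_independent_pair d T s ((W n)(2 + n := z (2 + n)))"
        using attains_at_independent_pair_fun_upd[OF Suc.IH] z True by simp
      moreover have "(W n)(2 + n := z (2 + n)) = W (Suc n)"
        by (auto simp: W_def fun_eq_iff)
      ultimately show ?thesis
        by simp
    next
      case False
      show ?thesis
        by (rule attains_at_independent_pair_cong[OF Suc.IH]) (use False in \<open>simp add: W_def\<close>)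
    qed
  qed
  from this[of d] show ?thesis
    by (rule attains_at_independent_pair_cong) (simp add: W_def)
qed

lemma attains_at_independent_pair_traceless:
  assumes "1 < d" and att: "attains_at_independent_pair d T s z" and z: "unit_tuple d z"
  shows "tensor_eval d T (z(0 := basis_vec 1, 1 := basis_vec 1))
       + tensor_eval d T (z(0 := basis_vec 2, 1 := basis_vec 2)) = 0"
proof -
  let ?H = "\<lambda>a b. tensor_eval d T (z(0 := basis_vec a, 1 := basis_vec b))"
  have form: "tensor_eval d T (z(0 := u, 1 := v)) = sym_form2 (?H 1 1) (?H 1 2) (?H 2 2) u v" for u v
    by (rule tensor_eval_sym_form2[OF sym \<open>1 < d\<close>])
  obtain u v where uv: "on_S1 u" "on_S1 v" "det2 u v \<noteq> 0"
    and "sym_form2 (?H 1 1) (?H 1 2) (?H 2 2) u v = s"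
    using att form by (metis attains_at_independent_pair_def)
  moreover have "\<bar>sym_form2 (?H 1 1) (?H 1 2) (?H 2 2) a b\<bar> \<le> \<bar>s\<bar>" if "on_S1 a" "on_S1 b" for a b
    using bound[of "z(0 := a, 1 := b)"] z that form[of a b] by (simp add: less_Suc_eq_0_disj)
  ultimately have "?H 2 2 = - ?H 1 1"
    using sym_form2_peak_traceless[OF _ uv _ s] by blast
  then show ?thesis
    by simp
qed

lemma attains_at_independent_pair_slice_traceless:
  assumes "2 \<le> d" and att: "attains_at_independent_pair d T s y" and y: "unit_tuple d y"
    and rest: "rest \<in> idx (d - 2)"
  shows "T (1 # 1 # rest) + T (2 # 2 # rest) = 0"
proof -
  define z where "z k = basis_vec ((1 # 1 # rest) ! k)" for k
  have idx: "i # i' # rest \<in> idx d" if "i \<in> {1, 2}" "i' \<in> {1, 2}" for i i'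
    using rest that assms(1) by (auto simp: idx_def)
  then have "unit_tuple d z"
    unfolding z_def by (meson insertI1 nth_idx on_S1_basis_vec)
  moreover from this have "attains_at_independent_pair d T s z"
    by (rule attains_at_independent_pair_unit_tuple[OF att y])
  ultimately have "tensor_eval d T (z(0 := basis_vec 1, 1 := basis_vec 1))
      + tensor_eval d T (z(0 := basis_vec 2, 1 := basis_vec 2)) = 0"
    using attains_at_independent_pair_traceless assms(1) by simp
  moreover have "z(0 := basis_vec i, 1 := basis_vec i) = (\<lambda>k. basis_vec ((i # i # rest) ! k))" for i
    by (auto simp: z_def fun_eq_iff nth_Cons split: nat.split)
  ultimately show ?thesis
    using tensor_eval_basis[OF idx] by simp
qed

end

lemma best_rank_one_approx_nonsym_attains:
  assumes "2 \<le> d" and sym: "sym_tensor d T" and best: "best_rank_one_approx d T a x"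
    and nonsym: "\<not> sym_tensor d (rank_one d a x)"
  shows "\<exists>y. unit_tuple d y \<and> attains_at_independent_pair d T a y"
proof -
  have x: "unit_tuple d x"
    using best by (simp add: best_rank_one_approx_def)
  obtain j where j: "j < d" "det2 (x 0) (x j) \<noteq> 0"
    using rank_one_sym_if_parallel[OF _ x] nonsym assms(1) by fastforce
  then have "j \<noteq> 0"
    by (metis det2_def mult.commute diff_self)
  define y where "y = x \<circ> transpose 1 j"
  have "y(0 := x 0, 1 := x j) = y" and y: "unit_tuple d y"
    using \<open>j \<noteq> 0\<close> x j(1) assms(1) by (auto simp: y_def fun_eq_iff transpose_def)
  moreover have "tensor_eval d T y = a"
    using tensor_eval_transpose[OF sym, of 1 j x] assms(1) j(1) best_rank_one_approx_coeff[OF best]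
    by (simp add: y_def)
  ultimately have "attains_at_independent_pair d T a y"
    unfolding attains_at_independent_pair_def using x j assms(1) by (metis less_le_trans zero_less_numeral)
  with y show ?thesis
    by blast
qed

theorem lemma5p1:
  fixes d :: nat and T :: "nat list \<Rightarrow> real"
  assumes "d \<ge> 2"
    and "sym_tensor d T"
    and "\<exists>is\<in>idx d. T is \<noteq> 0"
    and "\<exists>a x. best_rank_one_approx d T a x \<and> \<not> sym_tensor d (rank_one d a x)"
  shows "\<forall>rest\<in>idx (d - 2). T (1 # 1 # rest) + T (2 # 2 # rest) = 0"
proof
  fix rest assume rest: "rest \<in> idx (d - 2)"
  obtain a x where best: "best_rank_one_approx d T a x" and nonsym: "\<not> sym_tensor d (rank_one d a x)"
    using assms(4) by blast
  have "a \<noteq> 0"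
    using nonsym by (auto simp: sym_tensor_def rank_one_def)
  moreover obtain y where "unit_tuple d y" "attains_at_independent_pair d T a y"
    using best_rank_one_approx_nonsym_attains[OF assms(1,2) best nonsym] by blast
  ultimately show "T (1 # 1 # rest) + T (2 # 2 # rest) = 0"
    using attains_at_independent_pair_slice_traceless[OF assms(2) _ _ assms(1) _ _ rest]
      best_rank_one_approx_bound[OF best] by blast
qed

end
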